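(* Let $\varphi=\frac{1+\sqrt5}{2}$ and $\theta_0=\left(\frac12,\frac1\varphi,\frac1{\varphi^2}\right)$. For almost every point $m=(0,y,z)$ (with respect to Lebesgue measure on the face $X=0$ of the cube $[0,1]^3$), the circle $C_m=\{(y+t,\,z-t)\bmod 1: t\in\mathbb R\}$, parametrized by its first coordinate and thus identified with $[0,1)$, is cut by the sets $P_{a_1},\dots,P_{a_7}$ into a partition of $[0,1]$ into $6$ intervals $I_1,\dots,I_6$, each contained in a single $P_{a_i}$; and, letting $g$ be the coding of the translation $R:s\mapsto s+\frac{2}{\varphi}\bmod 1$ with respect to this partition (i.e. $g(s)_n=a_i$ iff $R^n(s)\in I_j$ with $I_j\subset P_{a_i}$), one has $$f_{\theta_0}(m)=\Phi(v),\qquad v=g(y(m)),$$ where $y(m)=y$ is the second coordinate of $m$ and $\Phi$ is extended to infinite words by concatenation.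
   Context: Billiard words: for $\theta\in\mathbb R_+^3\setminus\{0\}$ and $m\in\mathbb R^3$ such that the line $m+\mathbb R\theta$ contains no point with more than one integer coordinate, $f_\theta(m)\in\{a,b,c\}^{\mathbb N}$ is the infinite word recording, in order, the successive intersections of the half line $m+\mathbb R_+\theta$ with the planes $X=n$ (letter $a$), $Y=n$ (letter $b$), $Z=n$ (letter $c$), $n\in\mathbb Z$. For $m$ on the face $X=0$ this word begins with $a$. The face $X=0$ is identified with the torus $\mathbb T^2=(\mathbb R/\mathbb Z)^2$ via $(0,y,z)\mapsto(y,z)\bmod 1$. It is partitioned (up to boundaries) into seven sets, for $(y,z)\in[0,1)^2$: $P_{a_7}$: $y<4-2\varphi,\ z<2\varphi-3$; $P_{a_4}$: $y>4-2\varphi,\ z<2\varphi-3$; $P_{a_2}$: $y<4-2\varphi,\ 2\varphi-3<z<(2-\varphi)+y/\varphi$; $P_{a_1}$: $y<4-2\varphi,\ z>(2-\varphi)+y/\varphi$; $P_{a_5}$: $y>4-2\varphi,\ 2\varphi-3<z<(3-2\varphi)+y/\varphi$; $P_{a_3}$: $y>4-2\varphi,\ (3-2\varphi)+y/\varphi<z<(2-\varphi)+y/\varphi$; $P_{a_6}$: $y>4-2\varphi,\ z>(2-\varphi)+y/\varphi$. $\Phi$ is the morphism from $\{a_1,\dots,a_7\}^*$ to $\{a,b,c\}^*$ given by $\Phi(a_1)=acb$, $\Phi(a_2)=abc$, $\Phi(a_3)=abcb$, $\Phi(a_4)=abb$, $\Phi(a_5)=abbc$, $\Phi(a_6)=acbb$,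 $\Phi(a_7)=ab$. *)

theory Defs
  imports "HOL-Analysis.Analysis"
begin

definition phi :: real where "phi = (1 + sqrt 5) / 2"

datatype abc = a | b | c
datatype alph7 = a1 | a2 | a3 | a4 | a5 | a6 | a7

fun coord :: "abc \<Rightarrow> real \<times> real \<times> real \<Rightarrow> real" where
  "coord a (x, y, z) = x"
| "coord b (x, y, z) = y"
| "coord c (x, y, z) = z"

definition hit :: "real \<times> real \<times> real \<Rightarrow> real \<times> real \<times> real \<Rightarrow> abc \<Rightarrow> real \<Rightarrow> bool" where
  "hit \<theta> m l t \<longleftrightarrow> coord l m + t * coord l \<theta> \<in> \<int>"

definition admissible :: "real \<times> real \<times> real \<Rightarrow> real \<times> real \<times> real \<Rightarrow> bool" where
  "admissible \<theta> m \<longleftrightarrow> (\<forall>t::real. \<forall>l1 l2. l1 \<noteq> l2 \<longrightarrow> \<not> (hit \<theta> m l1 t \<and> hit \<theta> m l2 t))"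

text \<open>Billiard word: the n-th letter is the plane hit at the n-th intersection time
  (times t \<ge> 0, counted from 0) of the half line m + R_+ theta.\<close>
definition billiard :: "real \<times> real \<times> real \<Rightarrow> real \<times> real \<times> real \<Rightarrow> nat \<Rightarrow> abc" where
  "billiard \<theta> m n = (THE l. \<exists>t\<ge>0. hit \<theta> m l t \<and>
      card {s. 0 \<le> s \<and> s < t \<and> (\<exists>l'. hit \<theta> m l' s)} = n)"

definition P :: "alph7 \<Rightarrow> (real \<times> real) set" where
  "P i = {(y, z). 0 \<le> y \<and> y < 1 \<and> 0 \<le> z \<and> z < 1 \<and>
     (case i of
        a7 \<Rightarrow> y < 4 - 2*phi \<and> z < 2*phi - 3
      | a4 \<Rightarrow> y > 4 - 2*phi \<and> z < 2*phi - 3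
      | a2 \<Rightarrow> y < 4 - 2*phi \<and> 2*phi - 3 < z \<and> z < (2 - phi) + y / phi
      | a1 \<Rightarrow> y < 4 - 2*phi \<and> z > (2 - phi) + y / phi
      | a5 \<Rightarrow> y > 4 - 2*phi \<and> 2*phi - 3 < z \<and> z < (3 - 2*phi) + y / phi
      | a3 \<Rightarrow> y > 4 - 2*phi \<and> (3 - 2*phi) + y / phi < z \<and> z < (2 - phi) + y / phi
      | a6 \<Rightarrow> y > 4 - 2*phi \<and> z > (2 - phi) + y / phi)}"

text \<open>The point of the circle C_m (m = (0,y,z)) with first coordinate s:
  (y + t, z - t) mod 1 with s = y + t mod 1.\<close>
definition circ_pt :: "real \<Rightarrow> real \<Rightarrow> real \<Rightarrow> real \<times> real" where
  "circ_pt y z s = (frac s, frac (y + z - s))"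

definition rot :: "real \<Rightarrow> real" where
  "rot s = frac (s + 2 / phi)"

fun Phi :: "alph7 \<Rightarrow> abc list" where
  "Phi a1 = [a, c, b]"
| "Phi a2 = [a, b, c]"
| "Phi a3 = [a, b, c, b]"
| "Phi a4 = [a, b, b]"
| "Phi a5 = [a, b, b, c]"
| "Phi a6 = [a, c, b, b]"
| "Phi a7 = [a, b]"

text \<open>Phi extended to infinite words by concatenation (every Phi x is nonempty, so the
  first n+1 blocks contain at least n+1 letters).\<close>
definition Phi_inf :: "(nat \<Rightarrow> alph7) \<Rightarrow> nat \<Rightarrow> abc" where
  "Phi_inf v n = concat (map (Phi \<circ> v) [0..<Suc n]) ! n"

definition theta0 :: "real \<times> real \<times> real" where
  "theta0 = (1/2, 1/phi, 1/phi^2)"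

end

(* Write theta0 = (1/2, phi - 1, 2 - phi), using 1/phi = phi - 1 and 1/phi^2 = 2 - phi, and cut the
   half line into the time windows [2k, 2k + 2).  Each window starts with a crossing of a plane X = n
   and contains no other one; its crossings of the planes Y = n and Z = n are determined by
   Y_k = frac (y + 2k (phi - 1)) = R^k (y) and Z_k = frac (z + 2k (2 - phi)).  As
   (phi - 1) + (2 - phi) = 1, the point (Y_k, Z_k) lies on the circle C_m, and the time order of the
   crossings in the window depends only on the region P_i containing it: it is exactly Phi (a_i).
   So the billiard word is Phi applied to the coding of the orbit of y under R.

   On C_m, parametrised by s, the regions P_i cut out six arcs whose end points are affine in
   w = frac (y + z) with coefficients in Q(phi); which six depends on the position of w relative to
   four constants of Q(phi).  If 1, y and z are linearly independent over Q(phi), which holds almost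
   everywhere because Q(phi) is countable, then no two crossings are simultaneous and the orbit of y
   never meets an end point. *)

theory Submission
  imports Defs
begin

section \<open>The golden ratio\<close>

lemma phi_squared: "phi * phi = phi + 1"
proof -
  have "sqrt 5 * sqrt 5 = 5" by simp
  then show ?thesis unfolding phi_def by (simp add: field_simps)
qed

lemma phi_bounds: "161 < 100 * phi" "100 * phi < 162"
proof -
  have "222 / 100 < sqrt 5" by (rule real_less_rsqrt) (simp add: power2_eq_square)
  moreover have "sqrt 5 < 224 / 100" by (rule real_less_lsqrt) (simp_all add: power2_eq_square)
  ultimately show "161 < 100 * phi" "100 * phi < 162" unfolding phi_def by auto
qed

lemma phi_pos: "0 < phi"
  using phi_bounds by simp

lemma phi_times_phi: "phi * (phi * x) = phi * x + x"
  by (metis phi_squared distrib_right mult.assoc mult_1)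

lemma inverse_phi: "1 / phi = phi - 1"
  using phi_squared phi_pos by (simp add: field_simps)

lemma divide_phi: "x / phi = x * phi - x"
  by (metis inverse_phi right_diff_distrib' mult.right_neutral times_divide_eq_right)

lemma phi_mono: "u < v \<Longrightarrow> phi * u < phi * v"
  using phi_pos by simp

lemma phi_times_phi_minus_1: "phi * (phi - 1) = 1"
  using phi_squared by (simp add: algebra_simps)

lemma phi_plus_1_times_2_minus_phi: "(phi + 1) * (2 - phi) = 1"
  using phi_squared by (simp add: algebra_simps)

lemma golden_scalings_less:
  "u < v \<Longrightarrow> phi * u < phi * v \<and> (phi - 1) * u < (phi - 1) * v \<and> (2 - phi) * u < (2 - phi) * v"
  using phi_bounds by simp

section \<open>The field Q(phi) and generic points\<close>

definition Qphi :: "real set" where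
  "Qphi = (\<lambda>(p, q). of_rat p + of_rat q * phi) ` UNIV"

lemma countable_Qphi: "countable Qphi"
  unfolding Qphi_def by simp

lemma Qphi_of_rat_phi: "of_rat p + of_rat q * phi \<in> Qphi"
  unfolding Qphi_def by (rule image_eqI[of _ _ "(p, q)"]) simp_all

lemma Qphi_cases:
  assumes "x \<in> Qphi" obtains p q where "x = of_rat p + of_rat q * phi"
  using assms unfolding Qphi_def by auto

lemma Qphi_of_int: "of_int n \<in> Qphi"
  using Qphi_of_rat_phi[of "of_int n" 0] by simp

lemma Qphi_phi: "phi \<in> Qphi"
  using Qphi_of_rat_phi[of 0 1] by simp

lemma Qphi_add: "x \<in> Qphi \<Longrightarrow> y \<in> Qphi \<Longrightarrow> x + y \<in> Qphi"
proof (elim Qphi_cases)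
  fix p q p' q'
  assume "x = of_rat p + of_rat q * phi" "y = of_rat p' + of_rat q' * phi"
  then have "x + y = of_rat (p + p') + of_rat (q + q') * phi"
    by (simp add: of_rat_add algebra_simps)
  then show "x + y \<in> Qphi" by (simp add: Qphi_of_rat_phi)
qed

lemma Qphi_minus: "x \<in> Qphi \<Longrightarrow> - x \<in> Qphi"
proof (elim Qphi_cases)
  fix p q
  assume "x = of_rat p + of_rat q * phi"
  then have "- x = of_rat (- p) + of_rat (- q) * phi"
    by (simp add: of_rat_minus)
  then show "- x \<in> Qphi" by (simp add: Qphi_of_rat_phi)
qed

lemma Qphi_mult: "x \<in> Qphi \<Longrightarrow> y \<in> Qphi \<Longrightarrow> x * y \<in> Qphi"
proof (elim Qphi_cases)
  fix p q p' q'
  assume x: "x = of_rat p + of_rat q * phi" and y: "y = of_rat p' + of_rat q' * phi"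
  have "x * y = of_rat (p*p' + q*q') + of_rat (p*q' + q*p' + q*q') * phi"
    unfolding x y using phi_squared by (simp add: of_rat_add of_rat_mult algebra_simps) algebra
  then show "x * y \<in> Qphi" by (simp add: Qphi_of_rat_phi)
qed

lemma Qphi_diff: "x \<in> Qphi \<Longrightarrow> y \<in> Qphi \<Longrightarrow> x - y \<in> Qphi"
  using Qphi_add[of x "- y"] Qphi_minus by simp

lemma Qphi_Ints: "x \<in> \<int> \<Longrightarrow> x \<in> Qphi"
  by (auto elim: Ints_cases intro: Qphi_of_int)

lemma Qphi_numeral: "numeral n \<in> Qphi"
  using Qphi_of_int[of "numeral n"] by simp

lemma Qphi_0: "0 \<in> Qphi"
  using Qphi_of_int[of 0] by simp

lemma Qphi_1: "1 \<in> Qphi"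
  using Qphi_of_int[of 1] by simp

lemma Qphi_of_nat: "of_nat n \<in> Qphi"
  using Qphi_of_int[of "int n"] by simp

lemmas Qphi_closed = Qphi_add Qphi_minus Qphi_diff Qphi_mult Qphi_numeral Qphi_0 Qphi_1 Qphi_phi
  Qphi_of_int

lemma AE_no_affine_relation:
  fixes K :: "real set"
  assumes "countable K"
  shows "AE p in lborel. \<forall>p1\<in>K. \<forall>p2\<in>K. \<forall>r\<in>K. p1 * fst p + p2 * snd p = r \<longrightarrow> p1 = 0 \<and> p2 = 0"
proof (rule AE_I')
  let ?I = "{(p1, p2, r). p1 \<in> K \<and> p2 \<in> K \<and> r \<in> K \<and> (p1 \<noteq> 0 \<or> p2 \<noteq> 0)}"
  let ?line = "\<lambda>(p1::real, p2::real, r::real). {x :: real \<times> real. (p1, p2) \<bullet> x = r}"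
  have "countable ?I"
    by (rule countable_subset[of _ "K \<times> K \<times> K"]) (auto simp: assms)
  moreover have "?line i \<in> null_sets lborel" if "i \<in> ?I" for i
  proof -
    obtain p1 p2 r where i: "i = (p1, p2, r)" "p1 \<noteq> 0 \<or> p2 \<noteq> 0"
      using \<open>i \<in> ?I\<close> by auto
    have "negligible {x :: real \<times> real. (p1, p2) \<bullet> x = r}"
      by (rule negligible_hyperplane) (use i in \<open>auto simp: zero_prod_def\<close>)
    moreover have "closed {x :: real \<times> real. (p1, p2) \<bullet> x = r}"
      by (rule closed_hyperplane)
    ultimately show ?thesis
      unfolding i by (auto simp: negligible_iff_null_sets null_sets_completion_iff borel_closed)
  qed
  ultimately show "(\<Union>i\<in>?I. ?line i) \<in> null_sets lborel"
    by (rule null_sets_UN')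
  show "{p \<in> space lborel. \<not> (\<forall>p1\<in>K. \<forall>p2\<in>K. \<forall>r\<in>K. p1 * fst p + p2 * snd p = r \<longrightarrow> p1 = 0 \<and> p2 = 0)}
      \<subseteq> (\<Union>i\<in>?I. ?line i)" (is "?bad \<subseteq> _")
  proof
    fix p assume "p \<in> ?bad"
    then obtain p1 p2 r
      where "p1 \<in> K" "p2 \<in> K" "r \<in> K" "p1 * fst p + p2 * snd p = r" "p1 \<noteq> 0 \<or> p2 \<noteq> 0"
      by blast
    then show "p \<in> (\<Union>i\<in>?I. ?line i)"
      by (intro UN_I[of "(p1, p2, r)"]) (simp_all add: inner_prod_def)
  qed
qed

definition Qphi_generic :: "real \<Rightarrow> real \<Rightarrow> bool" where
  "Qphi_generic y z \<longleftrightarrow> (\<forall>p1\<in>Qphi. \<forall>p2\<in>Qphi. \<forall>r\<in>Qphi. p1 * y + p2 * z = r \<longrightarrow> p1 = 0 \<and> p2 = 0)"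

lemma AE_Qphi_generic: "AE p in lborel. Qphi_generic (fst p) (snd p)"
  unfolding Qphi_generic_def by (rule AE_no_affine_relation[OF countable_Qphi])

lemma Qphi_genericD:
  "Qphi_generic y z \<Longrightarrow> p1 * y + p2 * z = r \<Longrightarrow> p1 \<in> Qphi \<Longrightarrow> p2 \<in> Qphi \<Longrightarrow> r \<in> Qphi \<Longrightarrow>
    p1 = 0 \<and> p2 = 0"
  unfolding Qphi_generic_def by blast

lemma Qphi_generic_notin:
  assumes "Qphi_generic y z"
  shows "y \<notin> Qphi" and "frac (y + z) \<notin> Qphi"
proof -
  show "y \<notin> Qphi"
  proof
    assume "y \<in> Qphi"
    then show False using Qphi_genericD[OF assms, of 1 0 y] Qphi_0 Qphi_1 by simp
  qed
  show "frac (y + z) \<notin> Qphi"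
  proof
    assume "frac (y + z) \<in> Qphi"
    then have "frac (y + z) + of_int \<lfloor>y + z\<rfloor> \<in> Qphi" by (intro Qphi_closed)
    then show False using Qphi_genericD[OF assms, of 1 1] Qphi_1 by (simp add: frac_def)
  qed
qed

definition Qphi_affine :: "real \<Rightarrow> real \<Rightarrow> bool" where
  "Qphi_affine w x \<longleftrightarrow> (\<exists>p\<in>Qphi. \<exists>q\<in>Qphi. x = p * w + q)"

lemma Qphi_affine_const: "q \<in> Qphi \<Longrightarrow> Qphi_affine w q"
  unfolding Qphi_affine_def using Qphi_0 by force

lemma Qphi_affine_self: "Qphi_affine w w"
  unfolding Qphi_affine_def using Qphi_0 Qphi_1 by force

lemma Qphi_affine_shift: "q \<in> Qphi \<Longrightarrow> Qphi_affine w (w + q)"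
  unfolding Qphi_affine_def using Qphi_1 by force

lemma Qphi_affine_linear: "p \<in> Qphi \<Longrightarrow> q \<in> Qphi \<Longrightarrow> Qphi_affine w (p * w + q)"
  unfolding Qphi_affine_def by blast

lemmas Qphi_affine_intros = Qphi_affine_const Qphi_affine_self Qphi_affine_shift Qphi_affine_linear

lemma Qphi_generic_avoids_affine:
  assumes "Qphi_generic y z" "r \<in> Qphi" "Qphi_affine (frac (y + z)) x"
  shows "frac (y + r) \<noteq> x"
proof
  assume "frac (y + r) = x"
  moreover obtain p q where "p \<in> Qphi" "q \<in> Qphi" "x = p * frac (y + z) + q"
    using assms(3) unfolding Qphi_affine_def by blast
  ultimately have relation: "(1 - p) * y + (- p) * z = q - r + of_int \<lfloor>y + r\<rfloor> - p * of_int \<lfloor>y + z\<rfloor>"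
    by (simp add: frac_def algebra_simps)
  have "q - r + of_int \<lfloor>y + r\<rfloor> - p * of_int \<lfloor>y + z\<rfloor> \<in> Qphi"
    using \<open>p \<in> Qphi\<close> \<open>q \<in> Qphi\<close> assms(2) by (intro Qphi_closed)
  moreover have "1 - p \<in> Qphi" "- p \<in> Qphi"
    using \<open>p \<in> Qphi\<close> by (simp_all add: Qphi_closed)
  ultimately have "1 - p = 0 \<and> - p = 0"
    using Qphi_genericD[OF assms(1) relation] by blast
  then show False by linarith
qed

section \<open>Billiard words cut into blocks\<close>

lemma sorted_wrt_less_filter_nth:
  fixes xs :: "'a :: linorder list"
  assumes "sorted_wrt (<) xs" "i < length xs"
  shows "{x \<in> set xs. x < xs ! i} = set (take i xs)"
proof (intro equalityI subsetI)
  fix x assume "x \<in> {x \<in> set xs. x < xs ! i}"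
  then obtain j where j: "j < length xs" "x = xs ! j" "xs ! j < xs ! i"
    by (auto simp: in_set_conv_nth)
  have "j < i"
  proof (rule ccontr)
    assume "\<not> j < i"
    then have "xs ! i \<le> xs ! j"
      using sorted_wrt_nth_less[OF assms(1), of i j] j(1) by (cases "i = j") auto
    then show False using j(3) by simp
  qed
  then show "x \<in> set (take i xs)"
    using j assms(2) by (auto simp: in_set_conv_nth)
next
  fix x assume "x \<in> set (take i xs)"
  then obtain j where j: "j < i" "x = xs ! j"
    using assms(2) by (auto simp: in_set_conv_nth)
  then have "xs ! j < xs ! i"
    by (intro sorted_wrt_nth_less[OF assms(1)] assms(2))
  with j assms(2) show "x \<in> {x \<in> set xs. x < xs ! i}"
    by simp
qed

lemma card_hits_before_nth:
  assumes sorted: "sorted_wrt (<) ts"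
    and ts: "set ts = {t. 0 \<le> t \<and> t < T \<and> (\<exists>l. hit \<theta> m l t)}"
    and "i < length ts"
  shows "card {s. 0 \<le> s \<and> s < ts ! i \<and> (\<exists>l. hit \<theta> m l s)} = i"
proof -
  have "ts ! i \<in> set ts" using \<open>i < length ts\<close> by (rule nth_mem)
  then have "ts ! i < T" using ts by simp
  then have "{s. 0 \<le> s \<and> s < ts ! i \<and> (\<exists>l. hit \<theta> m l s)} = {s \<in> set ts. s < ts ! i}"
    unfolding ts by (auto intro: less_trans)
  also have "\<dots> = set (take i ts)"
    by (rule sorted_wrt_less_filter_nth[OF sorted \<open>i < length ts\<close>])
  finally show ?thesis
    using sorted \<open>i < length ts\<close> by (simp add: strict_sorted_iff distinct_card)
qed

(* Local finiteness rules out the junk value 0 of card for infinitely many earlier crossings. *)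
lemma billiard_nth_eqI:
  assumes adm: "admissible \<theta> m"
    and locally_finite: "\<And>T. finite {t. 0 \<le> t \<and> t < T \<and> (\<exists>l. hit \<theta> m l t)}"
    and sorted: "sorted_wrt (<) ts"
    and ts: "set ts = {t. 0 \<le> t \<and> t < T \<and> (\<exists>l. hit \<theta> m l t)}"
    and n: "n < length ts" and hit_n: "hit \<theta> m l (ts ! n)"
  shows "billiard \<theta> m n = l"
proof -
  let ?before = "\<lambda>t. {s. 0 \<le> s \<and> s < t \<and> (\<exists>l. hit \<theta> m l s)}"
  note card_before = card_hits_before_nth[OF sorted ts]
  have "ts ! n \<in> set ts" using n by (rule nth_mem)
  then have ts_nonneg: "0 \<le> ts ! n" using ts by simp
  have unique: "t = ts ! n" if t: "0 \<le> t" "hit \<theta> m l' t" "card (?before t) = n" for t l'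
  proof -
    have "t < T"
    proof (rule ccontr)
      assume "\<not> t < T"
      then have "set ts \<subseteq> ?before t" unfolding ts by auto
      then have "card (set ts) \<le> card (?before t)"
        by (rule card_mono[OF locally_finite])
      moreover have "card (set ts) = length ts"
        using sorted by (simp add: strict_sorted_iff distinct_card)
      ultimately show False using t(3) n by simp
    qed
    with t ts have "t \<in> set ts" by blast
    then obtain i where i: "i < length ts" "t = ts ! i"
      by (auto simp: in_set_conv_nth)
    then show ?thesis using card_before t(3) by simp
  qed
  show ?thesis
    unfolding billiard_def
  proof (rule the_equality)
    show "\<exists>t\<ge>0. hit \<theta> m l t \<and> card (?before t) = n"
      using ts_nonneg hit_n card_before[OF n] by blast
    show "l' = l" if "\<exists>t\<ge>0. hit \<theta> m l' t \<and> card (?before t) = n" for l'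
    proof -
      from that obtain t where t: "0 \<le> t" "hit \<theta> m l' t" "card (?before t) = n" by blast
      then have "t = ts ! n" by (rule unique)
      with t(2) hit_n adm show ?thesis unfolding admissible_def by blast
    qed
  qed
qed

lemma concat_blocks:
  fixes B :: "nat \<Rightarrow> (real \<times> abc) list" and L :: real
  assumes "0 < L"
    and sorted: "\<And>k. sorted_wrt (<) (map fst (B k))"
    and block: "\<And>k. set (B k) = {(t, l). L * k \<le> t \<and> t < L * k + L \<and> hit \<theta> m l t}"
  shows "sorted_wrt (<) (map fst (concat (map B [0..<K])))"
    and "set (concat (map B [0..<K])) = {(t, l). 0 \<le> t \<and> t < L * K \<and> hit \<theta> m l t}"
proof (induction K)
  case (Suc K)
  define start where "start = L * K"
  have "0 \<le> start" "L * Suc K = start + L" "start < start + L"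
    unfolding start_def using \<open>0 < L\<close> by (simp_all add: algebra_simps)
  then show "set (concat (map B [0..<Suc K])) = {(t, l). 0 \<le> t \<and> t < L * Suc K \<and> hit \<theta> m l t}"
    using Suc.IH(2) block[of K] unfolding start_def[symmetric] by auto
  have "\<forall>s\<in>set (map fst (concat (map B [0..<K]))). \<forall>t\<in>set (map fst (B K)). s < t"
    using Suc.IH(2) block[of K] by fastforce
  with Suc.IH(1) sorted[of K] show "sorted_wrt (<) (map fst (concat (map B [0..<Suc K])))"
    by (simp add: sorted_wrt_append)
qed simp_all

lemma image_fst_pairs: "fst ` {(t, l). R t l} = {t. \<exists>l. R t l}"
  by force

lemma finite_hits_before:
  assumes "0 < L" and "\<And>K :: nat. finite {(t, l). 0 \<le> t \<and> t < L * K \<and> hit \<theta> m l t}"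
  shows "finite {t. 0 \<le> t \<and> t < T \<and> (\<exists>l. hit \<theta> m l t)}"
proof -
  obtain K :: nat where "T / L \<le> K"
    using real_arch_simple by blast
  then have "T \<le> L * K"
    using \<open>0 < L\<close> by (simp add: field_simps)
  then have "{t. 0 \<le> t \<and> t < T \<and> (\<exists>l. hit \<theta> m l t)} \<subseteq>
      fst ` {(t, l). 0 \<le> t \<and> t < L * K \<and> hit \<theta> m l t}"
    by (auto simp: image_fst_pairs)
  then show ?thesis
    using assms(2) by (rule finite_subset[OF _ finite_imageI])
qed

lemma length_concat_Phi: "K \<le> length (concat (map (Phi \<circ> v) [0..<K]))"
proof (induction K)
  case (Suc K)
  have "0 < length (Phi (v K))" by (cases "v K") simp_all
  with Suc show ?case by (simp del: length_greater_0_conv)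
qed simp

lemma billiard_eq_Phi_inf_blocks:
  fixes B :: "nat \<Rightarrow> (real \<times> abc) list" and L :: real
  assumes adm: "admissible \<theta> m" and "0 < L"
    and sorted: "\<And>k. sorted_wrt (<) (map fst (B k))"
    and block: "\<And>k. set (B k) = {(t, l). L * k \<le> t \<and> t < L * k + L \<and> hit \<theta> m l t}"
    and letters: "\<And>k. map snd (B k) = Phi (v k)"
  shows "billiard \<theta> m = Phi_inf v"
proof
  fix n
  let ?W = "\<lambda>K. concat (map B [0..<K])"
  note prefix = concat_blocks[OF \<open>0 < L\<close> sorted block]
  have locally_finite: "finite {t. 0 \<le> t \<and> t < T \<and> (\<exists>l. hit \<theta> m l t)}" for T
    using \<open>0 < L\<close> by (rule finite_hits_before) (simp flip: prefix(2))
  have map_snd: "map snd (?W K) = concat (map (Phi \<circ> v) [0..<K])" for K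
    by (simp add: map_concat comp_def letters)
  have "length (?W (Suc n)) = length (concat (map (Phi \<circ> v) [0..<Suc n]))"
    using arg_cong[OF map_snd[of "Suc n"], of length] by (simp only: length_map)
  with length_concat_Phi[of "Suc n" v] have n: "n < length (?W (Suc n))"
    by linarith
  have "Phi_inf v n = snd (?W (Suc n) ! n)"
    unfolding Phi_inf_def map_snd[symmetric] using n by (rule nth_map)
  moreover have "billiard \<theta> m n = snd (?W (Suc n) ! n)"
  proof (rule billiard_nth_eqI[OF adm locally_finite])
    show "sorted_wrt (<) (map fst (?W (Suc n)))" by (rule prefix(1))
    show "set (map fst (?W (Suc n))) = {t. 0 \<le> t \<and> t < L * Suc n \<and> (\<exists>l. hit \<theta> m l t)}"
      unfolding set_map prefix(2) by (simp add: image_fst_pairs)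
    show "n < length (map fst (?W (Suc n)))" using n by simp
    have "?W (Suc n) ! n \<in> set (?W (Suc n))" using n by (rule nth_mem)
    then show "hit \<theta> m (snd (?W (Suc n) ! n)) (map fst (?W (Suc n)) ! n)"
      unfolding prefix(2) nth_map[OF n] by (simp add: case_prod_beta)
  qed
  ultimately show "billiard \<theta> m n = Phi_inf v n" by simp
qed

section \<open>Crossings in a time window of length 2\<close>

lemma hit_theta0:
  "hit theta0 (0, y, z) l t \<longleftrightarrow>
    (case l of a \<Rightarrow> t / 2 \<in> \<int> | b \<Rightarrow> y + t * (phi - 1) \<in> \<int> | c \<Rightarrow> z + t * (2 - phi) \<in> \<int>)"
proof -
  have "1 / phi^2 = 2 - phi"
    using phi_squared phi_pos by (simp add: field_simps power2_eq_square)
  then show ?thesis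
    by (cases l) (simp_all add: hit_def theta0_def inverse_phi)
qed

lemma Qphi_generic_admissible:
  assumes "Qphi_generic y z"
  shows "admissible theta0 (0, y, z)"
  unfolding admissible_def
proof (intro allI impI notI)
  fix t l1 l2
  assume "l1 \<noteq> l2" and hits: "hit theta0 (0, y, z) l1 t \<and> hit theta0 (0, y, z) l2 t"
  have no_ab: False if "t / 2 \<in> \<int>" "y + t * (phi - 1) \<in> \<int>"
  proof -
    have "y = (y + t * (phi - 1)) - 2 * (t / 2) * (phi - 1)" by simp
    also have "\<dots> \<in> Qphi" using that by (intro Qphi_closed Qphi_Ints)
    finally show False using Qphi_genericD[OF assms, of 1 0] by (simp add: Qphi_closed)
  qed
  have no_ac: False if "t / 2 \<in> \<int>" "z + t * (2 - phi) \<in> \<int>"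
  proof -
    have "z = (z + t * (2 - phi)) - 2 * (t / 2) * (2 - phi)" by simp
    also have "\<dots> \<in> Qphi" using that by (intro Qphi_closed Qphi_Ints)
    finally show False using Qphi_genericD[OF assms, of 0 1] by (simp add: Qphi_closed)
  qed
  have no_bc: False if "y + t * (phi - 1) \<in> \<int>" "z + t * (2 - phi) \<in> \<int>"
  proof -
    have "(phi - 1) * y + (- 1) * z = (phi - 1) * (y + t * (phi - 1)) - (z + t * (2 - phi))"
      using phi_squared by algebra
    also have "\<dots> \<in> Qphi" using that by (intro Qphi_closed Qphi_Ints)
    finally show False using Qphi_genericD[OF assms, of "phi - 1" "- 1"] by (simp add: Qphi_closed)
  qed
  show False
    using hits \<open>l1 \<noteq> l2\<close> no_ab no_ac no_bc unfolding hit_theta0 by (cases l1; cases l2) auto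
qed

lemma admissible_theta0_frac_pos:
  assumes "admissible theta0 (0, y, z)" "t0 / 2 \<in> \<int>"
  shows "0 < frac (y + t0 * (phi - 1))" and "0 < frac (z + t0 * (2 - phi))"
proof -
  have "hit theta0 (0, y, z) a t0" using assms(2) by (simp add: hit_theta0)
  then have "\<not> hit theta0 (0, y, z) l t0" if "l \<noteq> a" for l
    using assms(1) that unfolding admissible_def by blast
  from this[of b] this[of c] have "y + t0 * (phi - 1) \<notin> \<int>" "z + t0 * (2 - phi) \<notin> \<int>"
    by (simp_all add: hit_theta0)
  then show "0 < frac (y + t0 * (phi - 1))" "0 < frac (z + t0 * (2 - phi))"
    by (simp_all add: less_le)
qed

lemma Ints_add_iff_frac: "(x :: real) + d \<in> \<int> \<longleftrightarrow> frac x + d \<in> \<int>"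
proof -
  have "x + d = of_int \<lfloor>x\<rfloor> + (frac x + d)" by (simp add: frac_def)
  then show ?thesis by (simp only: add_in_Ints_iff_left[OF Ints_of_int])
qed

lemma Ints_between_0_and_3: "(u :: real) \<in> \<int> \<Longrightarrow> 0 < u \<Longrightarrow> u < 3 \<Longrightarrow> u = 1 \<or> u = 2"
proof (elim Ints_cases)
  fix k :: int
  assume "u = of_int k" "0 < u" "u < 3"
  then have "0 < k" "k < 3" by simp_all
  then have "k = 1 \<or> k = 2" by linarith
  then show "u = 1 \<or> u = 2" using \<open>u = of_int k\<close> by auto
qed

lemma mult_eq_iff_reciprocal:
  fixes c d x u :: real
  assumes "c * d = 1"
  shows "x * d = u \<longleftrightarrow> x = c * u"
proof -
  have "d \<noteq> 0" using assms by auto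
  then have "c = 1 / d" using assms by (simp add: eq_divide_eq)
  with \<open>d \<noteq> 0\<close> show ?thesis by (auto simp: field_simps)
qed

lemma window_crossing_a:
  fixes t0 \<tau> :: real
  assumes "t0 / 2 \<in> \<int>" "0 \<le> \<tau>" "\<tau> < 2"
  shows "(t0 + \<tau>) / 2 \<in> \<int> \<longleftrightarrow> \<tau> = 0"
proof -
  have "(t0 + \<tau>) / 2 \<in> \<int> \<longleftrightarrow> \<tau> / 2 \<in> \<int>"
    using assms(1) add_in_Ints_iff_left[of "t0 / 2" "\<tau> / 2"] by (simp add: add_divide_distrib)
  also have "\<dots> \<longleftrightarrow> \<tau> = 0"
    using assms(2,3) by (auto elim!: Ints_cases)
  finally show ?thesis .
qed

lemma window_crossing_b:
  assumes "0 < frac x" "0 \<le> \<tau>" "\<tau> < 2"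
  shows "x + \<tau> * (phi - 1) \<in> \<int> \<longleftrightarrow>
    \<tau> = phi * (1 - frac x) \<or> (4 - 2 * phi < frac x \<and> \<tau> = phi * (2 - frac x))"
proof -
  define d where "d = \<tau> * (phi - 1)"
  have scale: "frac x + d = k \<longleftrightarrow> \<tau> = phi * (k - frac x)" for k
    using mult_eq_iff_reciprocal[OF phi_times_phi_minus_1, of \<tau> "k - frac x"] unfolding d_def
    by linarith
  have "0 \<le> d"
    unfolding d_def using assms phi_bounds by simp
  have "\<tau> * (phi - 1) < 2 * (phi - 1)"
    using assms phi_bounds by (intro mult_strict_right_mono) auto
  then have "d < 2 * phi - 2"
    unfolding d_def by (simp add: algebra_simps)
  with \<open>0 \<le> d\<close> have "0 < frac x + d" "frac x + d < 3"
    using assms(1) frac_lt_1[of x] phi_bounds by linarith+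
  then have "x + d \<in> \<int> \<longleftrightarrow> frac x + d = 1 \<or> frac x + d = 2"
    using Ints_between_0_and_3 by (auto simp: Ints_add_iff_frac[of x])
  moreover have "frac x + d = 2 \<Longrightarrow> 4 - 2 * phi < frac x"
    using \<open>d < 2 * phi - 2\<close> by linarith
  ultimately show ?thesis
    unfolding d_def[symmetric] scale by auto
qed

lemma window_crossing_c:
  assumes "0 < frac x" "0 \<le> \<tau>" "\<tau> < 2"
  shows "x + \<tau> * (2 - phi) \<in> \<int> \<longleftrightarrow> 2 * phi - 3 < frac x \<and> \<tau> = (phi + 1) * (1 - frac x)"
proof -
  define d where "d = \<tau> * (2 - phi)"
  have scale: "frac x + d = 1 \<longleftrightarrow> \<tau> = (phi + 1) * (1 - frac x)"
    using mult_eq_iff_reciprocal[OF phi_plus_1_times_2_minus_phi, of \<tau> "1 - frac x"] unfolding d_def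
    by linarith
  have "0 \<le> d"
    unfolding d_def using assms phi_bounds by simp
  have "\<tau> * (2 - phi) < 2 * (2 - phi)"
    using assms phi_bounds by (intro mult_strict_right_mono) auto
  then have "d < 4 - 2 * phi"
    unfolding d_def by (simp add: algebra_simps)
  with \<open>0 \<le> d\<close> have "0 < frac x + d" "frac x + d < 2"
    using assms(1) frac_lt_1[of x] phi_bounds by linarith+
  then have "x + d \<in> \<int> \<longleftrightarrow> frac x + d = 1"
    using Ints_between_0_and_3[of "frac x + d"] by (auto simp: Ints_add_iff_frac[of x])
  moreover have "frac x + d = 1 \<Longrightarrow> 2 * phi - 3 < frac x"
    using \<open>d < 4 - 2 * phi\<close> by linarith
  ultimately show ?thesis
    unfolding d_def[symmetric] scale by auto
qed

lemma less_iff_of_scaled_diff: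
  fixes u v p q k :: real
  assumes "0 < k" "u - v = k * (p - q)"
  shows "u < v \<longleftrightarrow> p < q" "v < u \<longleftrightarrow> q < p"
proof -
  have "u < v \<longleftrightarrow> k * (p - q) < 0" "v < u \<longleftrightarrow> 0 < k * (p - q)"
    using assms(2) by linarith+
  then show "u < v \<longleftrightarrow> p < q" "v < u \<longleftrightarrow> q < p"
    using assms(1) by (simp_all add: mult_less_0_iff zero_less_mult_iff)
qed

(* The crossing times in a window, relative to its start, are phi (1 - Y) and phi (2 - Y) for the
   planes Y = n, (phi + 1) (1 - Z) for the planes Z = n, and 2 for the end of the window.  The
   boundaries of the regions P_i are exactly where two of them coincide. *)
lemma crossing_order:
  "phi * (2 - Y) < 2 \<longleftrightarrow> 4 - 2 * phi < Y"
  "(phi + 1) * (1 - Z) < 2 \<longleftrightarrow> 2 * phi - 3 < Z"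
  "(phi + 1) * (1 - Z) < phi * (1 - Y) \<longleftrightarrow> 2 - phi + Y / phi < Z"
  "phi * (1 - Y) < (phi + 1) * (1 - Z) \<longleftrightarrow> Z < 2 - phi + Y / phi"
  "(phi + 1) * (1 - Z) < phi * (2 - Y) \<longleftrightarrow> 3 - 2 * phi + Y / phi < Z"
  "phi * (2 - Y) < (phi + 1) * (1 - Z) \<longleftrightarrow> Z < 3 - 2 * phi + Y / phi"
proof -
  have "phi * (2 - Y) - 2 = phi * ((4 - 2 * phi) - Y)"
    using phi_squared by algebra
  then show "phi * (2 - Y) < 2 \<longleftrightarrow> 4 - 2 * phi < Y"
    using less_iff_of_scaled_diff(1) phi_pos by blast
  have "(phi + 1) * (1 - Z) - 2 = (phi + 1) * ((2 * phi - 3) - Z)"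
    using phi_squared by algebra
  then show "(phi + 1) * (1 - Z) < 2 \<longleftrightarrow> 2 * phi - 3 < Z"
    using less_iff_of_scaled_diff(1)[of "phi + 1"] phi_pos by simp
  have "(phi + 1) * (1 - Z) - phi * (1 - Y) = (phi + 1) * ((2 - phi + Y / phi) - Z)"
    unfolding divide_phi using phi_squared by algebra
  then show "(phi + 1) * (1 - Z) < phi * (1 - Y) \<longleftrightarrow> 2 - phi + Y / phi < Z"
    "phi * (1 - Y) < (phi + 1) * (1 - Z) \<longleftrightarrow> Z < 2 - phi + Y / phi"
    using less_iff_of_scaled_diff[of "phi + 1"] phi_pos by simp_all
  have "(phi + 1) * (1 - Z) - phi * (2 - Y) = (phi + 1) * ((3 - 2 * phi + Y / phi) - Z)"
    unfolding divide_phi using phi_squared by algebra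
  then show "(phi + 1) * (1 - Z) < phi * (2 - Y) \<longleftrightarrow> 3 - 2 * phi + Y / phi < Z"
    "phi * (2 - Y) < (phi + 1) * (1 - Z) \<longleftrightarrow> Z < 3 - 2 * phi + Y / phi"
    using less_iff_of_scaled_diff[of "phi + 1"] phi_pos by simp_all
qed

lemma window_hits_theta0:
  fixes y z t0 :: real
  defines "Y \<equiv> frac (y + t0 * (phi - 1))" and "Z \<equiv> frac (z + t0 * (2 - phi))"
  assumes "t0 / 2 \<in> \<int>" "0 < Y" "0 < Z"
  shows "{(t, l). t0 \<le> t \<and> t < t0 + 2 \<and> hit theta0 (0, y, z) l t} =
    {(t0, a), (t0 + phi * (1 - Y), b)} \<union>
    (if 4 - 2 * phi < Y then {(t0 + phi * (2 - Y), b)} else {}) \<union>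
    (if 2 * phi - 3 < Z then {(t0 + (phi + 1) * (1 - Z), c)} else {})"
proof -
  have Y1: "Y < 1" and Z1: "Z < 1" unfolding Y_def Z_def by (simp_all add: frac_lt_1)
  have "0 < phi * Y" using \<open>0 < Y\<close> phi_pos by simp
  then have window: "0 < phi * (1 - Y)" "phi * (1 - Y) < 2" "phi * (1 - Y) < phi * (2 - Y)"
    using Y1 phi_bounds by (simp_all add: algebra_simps)
  have "0 < (phi + 1) * (1 - Z)" using Z1 phi_pos by simp
  have "hit theta0 (0, y, z) l (t0 + \<tau>) \<longleftrightarrow>
      (case l of a \<Rightarrow> \<tau> = 0 | b \<Rightarrow> \<tau> = phi * (1 - Y) \<or> (4 - 2 * phi < Y \<and> \<tau> = phi * (2 - Y))
       | c \<Rightarrow> 2 * phi - 3 < Z \<and> \<tau> = (phi + 1) * (1 - Z))"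
    if "0 \<le> \<tau>" "\<tau> < 2" for l \<tau>
  proof -
    have sums: "y + (t0 + \<tau>) * (phi - 1) = (y + t0 * (phi - 1)) + \<tau> * (phi - 1)"
      "z + (t0 + \<tau>) * (2 - phi) = (z + t0 * (2 - phi)) + \<tau> * (2 - phi)"
      by (simp_all add: algebra_simps)
    show ?thesis
      using window_crossing_a[OF assms(3) that] window_crossing_b[OF assms(4)[unfolded Y_def] that]
        window_crossing_c[OF assms(5)[unfolded Z_def] that]
      unfolding hit_theta0 sums Y_def Z_def by (cases l) (simp_all only: abc.case)
  qed
  from this[of "t - t0" for t] show ?thesis
    using window \<open>0 < (phi + 1) * (1 - Z)\<close> crossing_order(1,2) by (auto split: abc.splits if_splits)
qed

(* The crossings of a window [t0, t0 + 2): t0 (plane X), B1 and B2 (planes Y) and C (plane Z),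
   listed in time order for (Y, Z) in P i.  This table is where the morphism Phi comes from. *)
fun block_hits :: "alph7 \<Rightarrow> real \<Rightarrow> real \<Rightarrow> real \<Rightarrow> real \<Rightarrow> (real \<times> abc) list" where
  "block_hits a1 t0 B1 B2 C = [(t0, a), (C, c), (B1, b)]"
| "block_hits a2 t0 B1 B2 C = [(t0, a), (B1, b), (C, c)]"
| "block_hits a3 t0 B1 B2 C = [(t0, a), (B1, b), (C, c), (B2, b)]"
| "block_hits a4 t0 B1 B2 C = [(t0, a), (B1, b), (B2, b)]"
| "block_hits a5 t0 B1 B2 C = [(t0, a), (B1, b), (B2, b), (C, c)]"
| "block_hits a6 t0 B1 B2 C = [(t0, a), (C, c), (B1, b), (B2, b)]"
| "block_hits a7 t0 B1 B2 C = [(t0, a), (B1, b)]"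

lemma map_snd_block_hits: "map snd (block_hits i t0 B1 B2 C) = Phi i"
  by (cases i) simp_all

lemma block_hits_theta0:
  fixes y z t0 :: real and i :: alph7
  defines "Y \<equiv> frac (y + t0 * (phi - 1))" and "Z \<equiv> frac (z + t0 * (2 - phi))"
  defines "hs \<equiv> block_hits i t0 (t0 + phi * (1 - Y)) (t0 + phi * (2 - Y)) (t0 + (phi + 1) * (1 - Z))"
  assumes "t0 / 2 \<in> \<int>" "0 < Y" "0 < Z" "(Y, Z) \<in> P i"
  shows "sorted_wrt (<) (map fst hs)"
    and "set hs = {(t, l). t0 \<le> t \<and> t < t0 + 2 \<and> hit theta0 (0, y, z) l t}"
proof -
  have "Y < 1" "Z < 1" unfolding Y_def Z_def by (simp_all add: frac_lt_1)
  then have window: "0 < phi * (1 - Y)" "phi * (1 - Y) < phi * (2 - Y)" "0 < (phi + 1) * (1 - Z)"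
    using phi_pos by simp_all
  have "0 < Y / phi" using \<open>0 < Y\<close> phi_pos by simp
  then have upper_boundary_above: "2 * phi - 3 < 2 - phi + Y / phi"
    using phi_bounds by linarith
  have lower_boundary_above: "2 * phi - 3 < 3 - 2 * phi + Y / phi" if "4 - 2 * phi < Y"
  proof -
    have "(4 - 2 * phi) / phi < Y / phi" using that phi_pos by (simp add: divide_strict_right_mono)
    moreover have "(4 - 2 * phi) / phi = 4 * phi - 6"
      unfolding divide_phi using phi_squared by algebra
    ultimately show ?thesis by linarith
  qed
  note hits = window_hits_theta0[OF assms(4) assms(5,6)[unfolded Y_def Z_def], folded Y_def Z_def]
  show "sorted_wrt (<) (map fst hs)" "set hs = {(t, l). t0 \<le> t \<and> t < t0 + 2 \<and> hit theta0 (0, y, z) l t}"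
    using assms(7) window upper_boundary_above lower_boundary_above crossing_order
    unfolding hits hs_def P_def by (cases i; auto)+
qed

lemma billiard_theta0_coding:
  assumes adm: "admissible theta0 (0, y, z)"
    and coding: "\<And>k. (frac (y + 2 * real k * (phi - 1)), frac (z + 2 * real k * (2 - phi))) \<in> P (v k)"
  shows "billiard theta0 (0, y, z) = Phi_inf v"
proof (rule billiard_eq_Phi_inf_blocks[OF adm])
  fix k :: nat
  have "2 * real k / 2 \<in> \<int>" by simp
  note block = block_hits_theta0[OF this admissible_theta0_frac_pos[OF adm this] coding]
  let ?B = "\<lambda>k. block_hits (v k) (2 * real k)
    (2 * real k + phi * (1 - frac (y + 2 * real k * (phi - 1))))
    (2 * real k + phi * (2 - frac (y + 2 * real k * (phi - 1))))
    (2 * real k + (phi + 1) * (1 - frac (z + 2 * real k * (2 - phi))))"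
  show "sorted_wrt (<) (map fst (?B k))" by (rule block(1))
  show "set (?B k) = {(t, l). 2 * real k \<le> t \<and> t < 2 * real k + 2 \<and> hit theta0 (0, y, z) l t}"
    by (rule block(2))
  show "map snd (?B k) = Phi (v k)" by (rule map_snd_block_hits)
qed simp

section \<open>The partition of the circle\<close>

lemma frac_diff_below: "s < w \<Longrightarrow> w - s < 1 \<Longrightarrow> frac (w - s) = w - s"
  by (simp add: frac_eq)

lemma frac_diff_above: "w < s \<Longrightarrow> s - w \<le> 1 \<Longrightarrow> frac (w - s) = w - s + 1"
  using frac_eq[of "w - s + 1"] by (simp add: frac_def)

(* With w = frac (y + z) the point of C_m with first coordinate s is (s, frac (w - s)), which is
   (s, w - s) on the sheet s < w and (s, w - s + 1) on the sheet s > w.  Each lemma below puts an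
   arc of one sheet into one region P_i; multiplying a bound on s by phi makes the conditions
   Z < c + Y / phi linear. *)
lemma circle_a7_below:
  assumes "0 < s" "s < w" "w < 1" "w + (3 - 2 * phi) < s" "s < 4 - 2 * phi"
  shows "(s, frac (w - s)) \<in> P a7"
proof -
  have "frac (w - s) = w - s" using assms phi_bounds by (intro frac_diff_below) linarith+
  then show ?thesis
    using assms phi_bounds unfolding P_def
    by (simp add: algebra_simps phi_squared phi_times_phi divide_phi)
qed

lemma circle_a4_below:
  assumes "4 - 2 * phi < s" "s < w" "w < 1" "w + (3 - 2 * phi) < s"
  shows "(s, frac (w - s)) \<in> P a4"
proof -
  have "frac (w - s) = w - s" using assms phi_bounds by (intro frac_diff_below) linarith+
  then show ?thesis
    using assms phi_bounds unfolding P_def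
    by (simp add: algebra_simps phi_squared phi_times_phi divide_phi)
qed

lemma circle_a2_below:
  assumes "0 < s" "s < w + (3 - 2 * phi)" "(phi - 1) * w + (3 - 2 * phi) < s" "s < 4 - 2 * phi" "w < 1"
  shows "(s, frac (w - s)) \<in> P a2"
proof -
  have "frac (w - s) = w - s" using assms phi_bounds by (intro frac_diff_below) linarith+
  then show ?thesis
    using assms phi_mono[OF assms(3)] phi_bounds unfolding P_def
    by (simp add: algebra_simps phi_squared phi_times_phi divide_phi)
qed

lemma circle_a1_below:
  assumes "0 < s" "s < w" "w < 1" "s < 4 - 2 * phi" "s < (phi - 1) * w + (3 - 2 * phi)"
  shows "(s, frac (w - s)) \<in> P a1"
proof -
  have "frac (w - s) = w - s" using assms phi_bounds by (intro frac_diff_below) linarith+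
  then show ?thesis
    using assms phi_mono[OF assms(5)] phi_bounds unfolding P_def
    by (simp add: algebra_simps phi_squared phi_times_phi divide_phi)
qed

lemma circle_a1_above:
  assumes "0 < w" "w < s" "s < (phi - 1) * w + (2 - phi)" "s < 4 - 2 * phi"
  shows "(s, frac (w - s)) \<in> P a1"
proof -
  have "frac (w - s) = w - s + 1" using assms phi_bounds by (intro frac_diff_above) linarith+
  then show ?thesis
    using assms phi_mono[OF assms(3)] phi_bounds unfolding P_def
    by (simp add: algebra_simps phi_squared phi_times_phi divide_phi)
qed

lemma circle_a2_above:
  assumes "0 < w" "w < s" "(phi - 1) * w + (2 - phi) < s" "s < 4 - 2 * phi"
  shows "(s, frac (w - s)) \<in> P a2"
proof -
  have "frac (w - s) = w - s + 1" using assms phi_bounds by (intro frac_diff_above) linarith+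
  then show ?thesis
    using assms phi_mono[OF assms(3)] phi_bounds unfolding P_def
    by (simp add: algebra_simps phi_squared phi_times_phi divide_phi)
qed

lemma circle_a3_above:
  assumes "0 < w" "w < s" "4 - 2 * phi < s" "s < 1" "(phi - 1) * w + (2 - phi) < s" "s < (phi - 1) * w + (4 - 2 * phi)"
  shows "(s, frac (w - s)) \<in> P a3"
proof -
  have "frac (w - s) = w - s + 1" using assms phi_bounds by (intro frac_diff_above) linarith+
  then show ?thesis
    using assms phi_mono[OF assms(5)] phi_mono[OF assms(6)] phi_bounds unfolding P_def
    by (simp add: algebra_simps phi_squared phi_times_phi divide_phi)
qed

lemma circle_a5_above:
  assumes "0 < w" "w < s" "4 - 2 * phi < s" "s < 1" "(phi - 1) * w + (4 - 2 * phi) < s" "s < w + (4 - 2 * phi)"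
  shows "(s, frac (w - s)) \<in> P a5"
proof -
  have "frac (w - s) = w - s + 1" using assms phi_bounds by (intro frac_diff_above) linarith+
  then show ?thesis
    using assms phi_mono[OF assms(5)] phi_bounds unfolding P_def
    by (simp add: algebra_simps phi_squared phi_times_phi divide_phi)
qed

lemma circle_a4_above:
  assumes "0 < w" "w + (4 - 2 * phi) < s" "s < 1"
  shows "(s, frac (w - s)) \<in> P a4"
proof -
  have "frac (w - s) = w - s + 1" using assms phi_bounds by (intro frac_diff_above) linarith+
  then show ?thesis
    using assms phi_bounds unfolding P_def
    by (simp add: algebra_simps phi_squared phi_times_phi divide_phi)
qed

lemma circle_a6_above:
  assumes "0 < w" "w < s" "4 - 2 * phi < s" "s < 1" "s < (phi - 1) * w + (2 - phi)"
  shows "(s, frac (w - s)) \<in> P a6"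
proof -
  have "frac (w - s) = w - s + 1" using assms phi_bounds by (intro frac_diff_above) linarith+
  then show ?thesis
    using assms phi_mono[OF assms(5)] phi_bounds unfolding P_def
    by (simp add: algebra_simps phi_squared phi_times_phi divide_phi)
qed

fun labelled_arcs :: "real \<Rightarrow> real list \<Rightarrow> alph7 list \<Rightarrow> bool" where
  "labelled_arcs w (x # y # cs) (l # ls) \<longleftrightarrow>
     x < y \<and> (\<forall>s\<in>{x<..<y}. (s, frac (w - s)) \<in> P l) \<and> labelled_arcs w (y # cs) ls"
| "labelled_arcs w [x] [] \<longleftrightarrow> True"
| "labelled_arcs w _ _ \<longleftrightarrow> False"

lemma labelled_arcs_nth:
  assumes "labelled_arcs w cs ls"
  shows "length cs = Suc (length ls)"
    and "j < length ls \<Longrightarrow> cs ! j < cs ! Suc j"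
    and "j < length ls \<Longrightarrow> s \<in> {cs ! j<..<cs ! Suc j} \<Longrightarrow> (s, frac (w - s)) \<in> P (ls ! j)"
  using assms
  by (induction w cs ls arbitrary: j rule: labelled_arcs.induct) (auto simp: nth_Cons split: nat.splits)

definition circle_partition :: "real \<Rightarrow> real list \<Rightarrow> alph7 list \<Rightarrow> bool" where
  "circle_partition w cs ls \<longleftrightarrow> length ls = 6 \<and> hd cs = 0 \<and> last cs = 1 \<and> labelled_arcs w cs ls \<and>
     successively (\<noteq>) ls \<and> (\<forall>x\<in>set cs. Qphi_affine w x)"

lemma circle_partition_regime_1:
  assumes w: "0 < w" "w < 2 * phi - 3"
  shows "circle_partition w
    [0, w, (phi - 1) * w + (2 - phi), 4 - 2 * phi,
     (phi - 1) * w + (4 - 2 * phi), w + (4 - 2 * phi), 1]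
    [a7, a1, a2, a3, a5, a4]"
    (is "circle_partition w ?cs ?ls")
proof -
  have order: "0 < w"
    "w < (phi - 1) * w + (2 - phi)"
    "(phi - 1) * w + (2 - phi) < 4 - 2 * phi"
    "4 - 2 * phi < (phi - 1) * w + (4 - 2 * phi)"
    "(phi - 1) * w + (4 - 2 * phi) < w + (4 - 2 * phi)"
    "w + (4 - 2 * phi) < 1"
    using w w[THEN golden_scalings_less] phi_bounds
    by (simp_all add: algebra_simps phi_squared phi_times_phi)
  have "(s, frac (w - s)) \<in> P a7"
    if "0 < s" "s < w" for s
    using that w order phi_bounds by (intro circle_a7_below) linarith+
  moreover have "(s, frac (w - s)) \<in> P a1"
    if "w < s" "s < (phi - 1) * w + (2 - phi)" for s
    using that w order phi_bounds by (intro circle_a1_above) linarith+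
  moreover have "(s, frac (w - s)) \<in> P a2"
    if "(phi - 1) * w + (2 - phi) < s" "s < 4 - 2 * phi" for s
    using that w order phi_bounds by (intro circle_a2_above) linarith+
  moreover have "(s, frac (w - s)) \<in> P a3"
    if "4 - 2 * phi < s" "s < (phi - 1) * w + (4 - 2 * phi)" for s
    using that w order phi_bounds by (intro circle_a3_above) linarith+
  moreover have "(s, frac (w - s)) \<in> P a5"
    if "(phi - 1) * w + (4 - 2 * phi) < s" "s < w + (4 - 2 * phi)" for s
    using that w order phi_bounds by (intro circle_a5_above) linarith+
  moreover have "(s, frac (w - s)) \<in> P a4"
    if "w + (4 - 2 * phi) < s" "s < 1" for s
    using that w order phi_bounds by (intro circle_a4_above) linarith+
  ultimately have "labelled_arcs w ?cs ?ls"
    unfolding labelled_arcs.simps Ball_def greaterThanLessThan_iff using order by blast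
  then show ?thesis
    unfolding circle_partition_def
    by (simp del: labelled_arcs.simps add: Qphi_affine_intros Qphi_closed)
qed

lemma circle_partition_regime_2:
  assumes w: "2 * phi - 3 < w" "w < 2 - phi"
  shows "circle_partition w
    [0, w + (3 - 2 * phi), w, (phi - 1) * w + (2 - phi),
     4 - 2 * phi, (phi - 1) * w + (4 - 2 * phi), 1]
    [a2, a7, a1, a2, a3, a5]"
    (is "circle_partition w ?cs ?ls")
proof -
  have order: "0 < w + (3 - 2 * phi)"
    "w + (3 - 2 * phi) < w"
    "w < (phi - 1) * w + (2 - phi)"
    "(phi - 1) * w + (2 - phi) < 4 - 2 * phi"
    "4 - 2 * phi < (phi - 1) * w + (4 - 2 * phi)"
    "(phi - 1) * w + (4 - 2 * phi) < 1"
    "(phi - 1) * w + (3 - 2 * phi) < 0"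
    using w w[THEN golden_scalings_less] phi_bounds
    by (simp_all add: algebra_simps phi_squared phi_times_phi)
  have "(s, frac (w - s)) \<in> P a2"
    if "0 < s" "s < w + (3 - 2 * phi)" for s
    using that w order phi_bounds by (intro circle_a2_below) linarith+
  moreover have "(s, frac (w - s)) \<in> P a7"
    if "w + (3 - 2 * phi) < s" "s < w" for s
    using that w order phi_bounds by (intro circle_a7_below) linarith+
  moreover have "(s, frac (w - s)) \<in> P a1"
    if "w < s" "s < (phi - 1) * w + (2 - phi)" for s
    using that w order phi_bounds by (intro circle_a1_above) linarith+
  moreover have "(s, frac (w - s)) \<in> P a2"
    if "(phi - 1) * w + (2 - phi) < s" "s < 4 - 2 * phi" for s
    using that w order phi_bounds by (intro circle_a2_above) linarith+
  moreover have "(s, frac (w - s)) \<in> P a3"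
    if "4 - 2 * phi < s" "s < (phi - 1) * w + (4 - 2 * phi)" for s
    using that w order phi_bounds by (intro circle_a3_above) linarith+
  moreover have "(s, frac (w - s)) \<in> P a5"
    if "(phi - 1) * w + (4 - 2 * phi) < s" "s < 1" for s
    using that w order phi_bounds by (intro circle_a5_above) linarith+
  ultimately have "labelled_arcs w ?cs ?ls"
    unfolding labelled_arcs.simps Ball_def greaterThanLessThan_iff using order by blast
  then show ?thesis
    unfolding circle_partition_def
    by (simp del: labelled_arcs.simps add: Qphi_affine_intros Qphi_closed)
qed

lemma circle_partition_regime_3:
  assumes w: "2 - phi < w" "w < phi - 1"
  shows "circle_partition w
    [0, (phi - 1) * w + (3 - 2 * phi), w + (3 - 2 * phi), w,
     (phi - 1) * w + (2 - phi), 4 - 2 * phi, 1]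
    [a1, a2, a7, a1, a2, a3]"
    (is "circle_partition w ?cs ?ls")
proof -
  have order: "0 < (phi - 1) * w + (3 - 2 * phi)"
    "(phi - 1) * w + (3 - 2 * phi) < w + (3 - 2 * phi)"
    "w + (3 - 2 * phi) < w"
    "w < (phi - 1) * w + (2 - phi)"
    "(phi - 1) * w + (2 - phi) < 4 - 2 * phi"
    "4 - 2 * phi < 1"
    "1 < (phi - 1) * w + (4 - 2 * phi)"
    using w w[THEN golden_scalings_less] phi_bounds
    by (simp_all add: algebra_simps phi_squared phi_times_phi)
  have "(s, frac (w - s)) \<in> P a1"
    if "0 < s" "s < (phi - 1) * w + (3 - 2 * phi)" for s
    using that w order phi_bounds by (intro circle_a1_below) linarith+
  moreover have "(s, frac (w - s)) \<in> P a2"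
    if "(phi - 1) * w + (3 - 2 * phi) < s" "s < w + (3 - 2 * phi)" for s
    using that w order phi_bounds by (intro circle_a2_below) linarith+
  moreover have "(s, frac (w - s)) \<in> P a7"
    if "w + (3 - 2 * phi) < s" "s < w" for s
    using that w order phi_bounds by (intro circle_a7_below) linarith+
  moreover have "(s, frac (w - s)) \<in> P a1"
    if "w < s" "s < (phi - 1) * w + (2 - phi)" for s
    using that w order phi_bounds by (intro circle_a1_above) linarith+
  moreover have "(s, frac (w - s)) \<in> P a2"
    if "(phi - 1) * w + (2 - phi) < s" "s < 4 - 2 * phi" for s
    using that w order phi_bounds by (intro circle_a2_above) linarith+
  moreover have "(s, frac (w - s)) \<in> P a3"
    if "4 - 2 * phi < s" "s < 1" for s
    using that w order phi_bounds by (intro circle_a3_above) linarith+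
  ultimately have "labelled_arcs w ?cs ?ls"
    unfolding labelled_arcs.simps Ball_def greaterThanLessThan_iff using order by blast
  then show ?thesis
    unfolding circle_partition_def
    by (simp del: labelled_arcs.simps add: Qphi_affine_intros Qphi_closed)
qed

lemma circle_partition_regime_4:
  assumes w: "phi - 1 < w" "w < 4 - 2 * phi"
  shows "circle_partition w
    [0, (phi - 1) * w + (3 - 2 * phi), w + (3 - 2 * phi), w,
     4 - 2 * phi, (phi - 1) * w + (2 - phi), 1]
    [a1, a2, a7, a1, a6, a3]"
    (is "circle_partition w ?cs ?ls")
proof -
  have order: "0 < (phi - 1) * w + (3 - 2 * phi)"
    "(phi - 1) * w + (3 - 2 * phi) < w + (3 - 2 * phi)"
    "w + (3 - 2 * phi) < w"
    "w < 4 - 2 * phi"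
    "4 - 2 * phi < (phi - 1) * w + (2 - phi)"
    "(phi - 1) * w + (2 - phi) < 1"
    "1 < (phi - 1) * w + (4 - 2 * phi)"
    using w w[THEN golden_scalings_less] phi_bounds
    by (simp_all add: algebra_simps phi_squared phi_times_phi)
  have "(s, frac (w - s)) \<in> P a1"
    if "0 < s" "s < (phi - 1) * w + (3 - 2 * phi)" for s
    using that w order phi_bounds by (intro circle_a1_below) linarith+
  moreover have "(s, frac (w - s)) \<in> P a2"
    if "(phi - 1) * w + (3 - 2 * phi) < s" "s < w + (3 - 2 * phi)" for s
    using that w order phi_bounds by (intro circle_a2_below) linarith+
  moreover have "(s, frac (w - s)) \<in> P a7"
    if "w + (3 - 2 * phi) < s" "s < w" for s
    using that w order phi_bounds by (intro circle_a7_below) linarith+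
  moreover have "(s, frac (w - s)) \<in> P a1"
    if "w < s" "s < 4 - 2 * phi" for s
    using that w order phi_bounds by (intro circle_a1_above) linarith+
  moreover have "(s, frac (w - s)) \<in> P a6"
    if "4 - 2 * phi < s" "s < (phi - 1) * w + (2 - phi)" for s
    using that w order phi_bounds by (intro circle_a6_above) linarith+
  moreover have "(s, frac (w - s)) \<in> P a3"
    if "(phi - 1) * w + (2 - phi) < s" "s < 1" for s
    using that w order phi_bounds by (intro circle_a3_above) linarith+
  ultimately have "labelled_arcs w ?cs ?ls"
    unfolding labelled_arcs.simps Ball_def greaterThanLessThan_iff using order by blast
  then show ?thesis
    unfolding circle_partition_def
    by (simp del: labelled_arcs.simps add: Qphi_affine_intros Qphi_closed)
qed

lemma circle_partition_regime_5:
  assumes w: "4 - 2 * phi < w" "w < 1"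
  shows "circle_partition w
    [0, (phi - 1) * w + (3 - 2 * phi), w + (3 - 2 * phi), 4 - 2 * phi,
     w, (phi - 1) * w + (2 - phi), 1]
    [a1, a2, a7, a4, a6, a3]"
    (is "circle_partition w ?cs ?ls")
proof -
  have order: "0 < (phi - 1) * w + (3 - 2 * phi)"
    "(phi - 1) * w + (3 - 2 * phi) < w + (3 - 2 * phi)"
    "w + (3 - 2 * phi) < 4 - 2 * phi"
    "4 - 2 * phi < w"
    "w < (phi - 1) * w + (2 - phi)"
    "(phi - 1) * w + (2 - phi) < 1"
    "1 < (phi - 1) * w + (4 - 2 * phi)"
    using w w[THEN golden_scalings_less] phi_bounds
    by (simp_all add: algebra_simps phi_squared phi_times_phi)
  have "(s, frac (w - s)) \<in> P a1"
    if "0 < s" "s < (phi - 1) * w + (3 - 2 * phi)" for s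
    using that w order phi_bounds by (intro circle_a1_below) linarith+
  moreover have "(s, frac (w - s)) \<in> P a2"
    if "(phi - 1) * w + (3 - 2 * phi) < s" "s < w + (3 - 2 * phi)" for s
    using that w order phi_bounds by (intro circle_a2_below) linarith+
  moreover have "(s, frac (w - s)) \<in> P a7"
    if "w + (3 - 2 * phi) < s" "s < 4 - 2 * phi" for s
    using that w order phi_bounds by (intro circle_a7_below) linarith+
  moreover have "(s, frac (w - s)) \<in> P a4"
    if "4 - 2 * phi < s" "s < w" for s
    using that w order phi_bounds by (intro circle_a4_below) linarith+
  moreover have "(s, frac (w - s)) \<in> P a6"
    if "w < s" "s < (phi - 1) * w + (2 - phi)" for s
    using that w order phi_bounds by (intro circle_a6_above) linarith+
  moreover have "(s, frac (w - s)) \<in> P a3"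
    if "(phi - 1) * w + (2 - phi) < s" "s < 1" for s
    using that w order phi_bounds by (intro circle_a3_above) linarith+
  ultimately have "labelled_arcs w ?cs ?ls"
    unfolding labelled_arcs.simps Ball_def greaterThanLessThan_iff using order by blast
  then show ?thesis
    unfolding circle_partition_def
    by (simp del: labelled_arcs.simps add: Qphi_affine_intros Qphi_closed)
qed

lemma circle_partition_exists:
  assumes "0 < w" "w < 1" "w \<notin> Qphi"
  shows "\<exists>cs ls. circle_partition w cs ls"
proof -
  have "2 * phi - 3 \<in> Qphi" "2 - phi \<in> Qphi" "phi - 1 \<in> Qphi" "4 - 2 * phi \<in> Qphi"
    by (intro Qphi_closed)+
  then have "w \<noteq> 2 * phi - 3" "w \<noteq> 2 - phi" "w \<noteq> phi - 1" "w \<noteq> 4 - 2 * phi"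
    using assms(3) by auto
  then consider "w < 2 * phi - 3" | "2 * phi - 3 < w" "w < 2 - phi" | "2 - phi < w" "w < phi - 1"
    | "phi - 1 < w" "w < 4 - 2 * phi" | "4 - 2 * phi < w"
    by linarith
  then show ?thesis
    using circle_partition_regime_1 circle_partition_regime_2 circle_partition_regime_3
      circle_partition_regime_4 circle_partition_regime_5 assms(1,2)
    by cases blast+
qed

lemma circle_partition_nth:
  assumes "circle_partition w cs ls"
  shows "cs ! 0 = 0" and "cs ! 6 = 1" and "\<forall>j<6. cs ! j < cs ! Suc j"
    and "\<forall>j<6. \<forall>s\<in>{cs ! j<..<cs ! Suc j}. (s, frac (w - s)) \<in> P (ls ! j)"
    and "\<forall>j<5. ls ! j \<noteq> ls ! Suc j"
proof -
  have arcs: "labelled_arcs w cs ls" and ls: "length ls = 6"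
    and "hd cs = 0" "last cs = 1" "successively (\<noteq>) ls"
    using assms unfolding circle_partition_def by simp_all
  have "length cs = 7" using labelled_arcs_nth(1)[OF arcs] ls by simp
  then have "cs \<noteq> []" by auto
  show "cs ! 0 = 0" using \<open>cs \<noteq> []\<close> \<open>hd cs = 0\<close> by (simp add: hd_conv_nth)
  show "cs ! 6 = 1" using \<open>cs \<noteq> []\<close> \<open>last cs = 1\<close> \<open>length cs = 7\<close> by (simp add: last_conv_nth)
  show "\<forall>j<6. cs ! j < cs ! Suc j" "\<forall>j<6. \<forall>s\<in>{cs ! j<..<cs ! Suc j}. (s, frac (w - s)) \<in> P (ls ! j)"
    using labelled_arcs_nth(2,3)[OF arcs] ls by simp_all
  show "\<forall>j<5. ls ! j \<noteq> ls ! Suc j"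
    using successively_nth[OF \<open>successively (\<noteq>) ls\<close>] ls by simp
qed

section \<open>The orbit of the rotation\<close>

lemma rot_power:
  assumes "0 \<le> y" "y < 1"
  shows "(rot ^^ n) y = frac (y + 2 * real n * (phi - 1))"
proof (induction n)
  case 0
  then show ?case using assms by (simp add: frac_eq)
next
  case (Suc n)
  have "(rot ^^ Suc n) y = frac (frac (y + 2 * real n * (phi - 1)) + 2 / phi)"
    unfolding funpow.simps comp_def Suc.IH rot_def ..
  also have "2 / phi = 2 * (phi - 1)"
    using inverse_phi by (metis times_divide_eq_right mult_1_right)
  also have "frac (frac (y + 2 * real n * (phi - 1)) + 2 * (phi - 1)) =
      frac (y + 2 * real n * (phi - 1) + 2 * (phi - 1))"
    by simp
  also have "y + 2 * real n * (phi - 1) + 2 * (phi - 1) = y + 2 * real (Suc n) * (phi - 1)"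
    by (simp add: algebra_simps)
  finally show ?case .
qed

lemma between_consecutive_nth:
  fixes cs :: "'a :: linorder list"
  assumes "x \<notin> set cs" "cs \<noteq> []" "hd cs < x" "x < last cs"
  shows "\<exists>j. Suc j < length cs \<and> cs ! j < x \<and> x < cs ! Suc j"
  using assms
proof (induction cs)
  case (Cons c cs)
  show ?case
  proof (cases cs)
    case Nil
    then show ?thesis using Cons.prems by simp
  next
    case (Cons d ds)
    show ?thesis
    proof (cases "x < d")
      case True
      then show ?thesis using Cons.prems \<open>cs = d # ds\<close> by auto
    next
      case False
      then have "d < x" using Cons.prems \<open>cs = d # ds\<close> by auto
      then obtain j where "Suc j < length cs" "cs ! j < x" "x < cs ! Suc j"
        using Cons.IH Cons.prems \<open>cs = d # ds\<close> by auto
      then show ?thesis by (intro exI[of _ "Suc j"]) simp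
    qed
  qed
qed simp

lemma orbit_in_arc:
  assumes g: "Qphi_generic y z" and y: "0 \<le> y" "y < 1"
    and part: "circle_partition (frac (y + z)) cs ls"
  shows "\<exists>j<6. cs ! j < (rot ^^ n) y \<and> (rot ^^ n) y < cs ! Suc j"
proof -
  let ?Y = "frac (y + 2 * real n * (phi - 1))"
  have "2 * real n * (phi - 1) \<in> Qphi" by (intro Qphi_closed Qphi_of_nat)
  then have notin: "?Y \<notin> set cs"
    using part Qphi_generic_avoids_affine[OF g] unfolding circle_partition_def by blast
  have arcs: "labelled_arcs (frac (y + z)) cs ls" "length ls = 6" "hd cs = 0" "last cs = 1"
    using part unfolding circle_partition_def by simp_all
  then have "length cs = 7" using labelled_arcs_nth(1) by simp
  then have "cs \<noteq> []" by auto
  then have "hd cs \<in> set cs" by simp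
  then have "?Y \<noteq> 0" using notin arcs(3) by metis
  then have "hd cs < ?Y" "?Y < last cs"
    using arcs(3,4) frac_ge_0[of "y + 2 * real n * (phi - 1)"] frac_lt_1[of "y + 2 * real n * (phi - 1)"]
    by linarith+
  with notin \<open>cs \<noteq> []\<close> obtain j where "Suc j < length cs" "cs ! j < ?Y" "?Y < cs ! Suc j"
    using between_consecutive_nth by blast
  then show ?thesis
    using \<open>length cs = 7\<close> rot_power[OF y] by auto
qed

lemma circ_pt_eq:
  assumes "(s, frac (frac (y + z) - s)) \<in> P l"
  shows "circ_pt y z s = (s, frac (frac (y + z) - s))"
proof -
  have "0 \<le> s" "s < 1" using assms unfolding P_def by auto
  moreover have "y + z - s = (frac (y + z) - s) + of_int \<lfloor>y + z\<rfloor>" by (simp add: frac_def)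
  then have "frac (y + z - s) = frac (frac (y + z) - s)" by (simp only: frac_add_of_int_right)
  ultimately show ?thesis unfolding circ_pt_def by (simp add: frac_eq)
qed

lemma frac_Z_on_circle:
  "frac (z + 2 * real n * (2 - phi)) = frac (frac (y + z) - frac (y + 2 * real n * (phi - 1)))"
proof -
  have "z + 2 * real n * (2 - phi) = (frac (y + z) - frac (y + 2 * real n * (phi - 1))) +
      of_int (\<lfloor>y + z\<rfloor> - \<lfloor>y + 2 * real n * (phi - 1)\<rfloor> + 2 * int n)"
    by (simp add: frac_def algebra_simps)
  then show ?thesis by (simp only: frac_add_of_int_right)
qed

lemma billiard_theta0_generic:
  assumes g: "Qphi_generic y z" and y: "0 \<le> y" "y \<le> 1"
  shows "admissible theta0 (0, y, z) \<and>
      (\<exists>cut :: nat \<Rightarrow> real. \<exists>lab :: nat \<Rightarrow> alph7.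
         cut 0 = 0 \<and> cut 6 = 1 \<and> (\<forall>j<6. cut j < cut (Suc j)) \<and>
         (\<forall>j<6. \<forall>s\<in>{cut j<..<cut (Suc j)}. circ_pt y z s \<in> P (lab j)) \<and>
         (\<forall>j<5. lab j \<noteq> lab (Suc j)) \<and>
         (\<exists>v :: nat \<Rightarrow> alph7.
            (\<forall>n. \<exists>j<6. (rot ^^ n) y \<in> {cut j<..<cut (Suc j)} \<and> v n = lab j) \<and>
            billiard theta0 (0, y, z) = Phi_inf v))"
proof -
  have adm: "admissible theta0 (0, y, z)" by (rule Qphi_generic_admissible[OF g])
  have "y \<noteq> 1" using Qphi_generic_notin(1)[OF g] Qphi_1 by auto
  with y have y1: "y < 1" by simp
  define w where "w = frac (y + z)"
  have "w \<notin> Qphi" unfolding w_def by (rule Qphi_generic_notin(2)[OF g])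
  then have "w \<noteq> 0" using Qphi_0 by auto
  then have "0 < w" "w < 1" unfolding w_def using frac_ge_0[of "y + z"] frac_lt_1[of "y + z"] by linarith+
  then obtain cs ls where part: "circle_partition w cs ls"
    using circle_partition_exists \<open>w \<notin> Qphi\<close> by blast
  note arcs = circle_partition_nth[OF part]
  have circ: "\<forall>j<6. \<forall>s\<in>{cs ! j<..<cs ! Suc j}. circ_pt y z s \<in> P (ls ! j)"
    using arcs(4) circ_pt_eq unfolding w_def by metis
  obtain J where J: "\<And>n. J n < 6 \<and> cs ! J n < (rot ^^ n) y \<and> (rot ^^ n) y < cs ! Suc (J n)"
    using orbit_in_arc[OF g y(1) y1 part[unfolded w_def]] by metis
  have "(frac (y + 2 * real n * (phi - 1)), frac (z + 2 * real n * (2 - phi))) \<in> P (ls ! J n)" for n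
    using arcs(4) J[of n] unfolding frac_Z_on_circle[of z n y] rot_power[OF y(1) y1] w_def by auto
  then have "billiard theta0 (0, y, z) = Phi_inf (\<lambda>n. ls ! J n)"
    by (rule billiard_theta0_coding[OF adm])
  then have "\<exists>v. (\<forall>n. \<exists>j<6. (rot ^^ n) y \<in> {cs ! j<..<cs ! Suc j} \<and> v n = ls ! j) \<and>
      billiard theta0 (0, y, z) = Phi_inf v"
    using J by (intro exI[of _ "\<lambda>n. ls ! J n"]) auto
  then show ?thesis
    using adm arcs(1,2,3,5) circ by blast
qed

theorem theorem1:
  shows "AE p in lborel. p \<in> {0..1::real} \<times> {0..1::real} \<longrightarrow>
    (let y = fst p; z = snd p; m = (0::real, y, z) in
      admissible theta0 m \<and>
      (\<exists>cut :: nat \<Rightarrow> real. \<exists>lab :: nat \<Rightarrow> alph7.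
         cut 0 = 0 \<and> cut 6 = 1 \<and> (\<forall>j<6. cut j < cut (Suc j)) \<and>
         (\<forall>j<6. \<forall>s\<in>{cut j<..<cut (Suc j)}. circ_pt y z s \<in> P (lab j)) \<and>
         (\<forall>j<5. lab j \<noteq> lab (Suc j)) \<and>
         (\<exists>v :: nat \<Rightarrow> alph7.
            (\<forall>n. \<exists>j<6. (rot ^^ n) y \<in> {cut j<..<cut (Suc j)} \<and> v n = lab j) \<and>
            billiard theta0 m = Phi_inf v)))"
  by (rule eventually_mono[OF AE_Qphi_generic], unfold Let_def, rule impI, rule billiard_theta0_generic)
    (auto simp: mem_Times_iff)

end
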